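(* Let $M\ge2$ be an integer, $\tau,\alpha>0$, $R\in(0,+\infty]$ with $R>2M\tau$ and $\alpha\le1/(4M\tau)$, and let $\boldsymbol\lambda^*\in\mathbb R^M$ with $\|\boldsymbol\lambda^*\|_1\le R-2M\tau$. Let $\pi$ be the sparsity prior and $p_0$ the probability measure defined in the context. Then $$\int_{\mathbb R^M}(\lambda_1-\lambda_1^* )^2\,p_0(d\boldsymbol\lambda)\le4\tau^2e^{4M\alpha\tau},\qquad \mathcal K(p_0,\pi)\le2(\alpha\|\boldsymbol\lambda^*\|_1+1)+4\sum_{j=1}^M\log\big(1+|\lambda_j^*|/\tau\big).$$
   Context: $\bar\omega$ is the Huber function: $\bar\omega(t)=t^2$ if $|t|\le1$, $\bar\omega(t)=2|t|-1$ otherwise. The sparsity prior is the probability measure on $\mathbb R^M$ $$\pi(d\boldsymbol\lambda)=\frac{\tau^{2M}}{C_{\alpha,\tau,R}}\Big\{\prod_{j=1}^M\frac{e^{-\bar\omega(\alpha\lambda_j)}}{(\tau^2+\lambda_j^2)^2}\Big\}\mathbf 1(\|\boldsymbol\lambda\|_1\le R)\,d\boldsymbol\lambda$$ with $C_{\alpha,\tau,R}$ the normalizing constant. $B_1(r)=\{\boldsymbol u\in\mathbb R^M:\|\boldsymbol u\|_1\le r\}$. The probability measure $p_0$ has Lebesgue density $\frac{dp_0}{d\boldsymbol\lambda}(\boldsymbol\lambda)\propto\frac{d\pi}{d\boldsymbol\lambda}(\boldsymbol\lambda-\boldsymbol\lambda^* )\,\mathbf 1_{B_1(2M\tau)}(\boldsymbol\lambda-\boldsymbol\lambda^*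 )$. $\mathcal K$ denotes the Kullback–Leibler divergence. *)

theory Defs
  imports "HOL-Probability.Probability"
begin

text \<open>Vectors of R^M are represented as functions nat => real restricted to indices 0..M-1
  (coordinate lambda_1 is index 0); Lebesgue measure on R^M is the product measure.\<close>

definition lebM :: "nat \<Rightarrow> (nat \<Rightarrow> real) measure" where
  "lebM M = PiM {..<M} (\<lambda>_. lborel)"

definition huber :: "real \<Rightarrow> real" where
  "huber t = (if \<bar>t\<bar> \<le> 1 then t\<^sup>2 else 2 * \<bar>t\<bar> - 1)"

definition l1norm :: "nat \<Rightarrow> (nat \<Rightarrow> real) \<Rightarrow> real" where
  "l1norm M x = (\<Sum>j<M. \<bar>x j\<bar>)"

definition prior_unnorm :: "nat \<Rightarrow> real \<Rightarrow> real \<Rightarrow> ereal \<Rightarrow> (nat \<Rightarrow> real) \<Rightarrow> real" where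
  "prior_unnorm M \<alpha> \<tau> R x =
     \<tau> ^ (2 * M) * (\<Prod>j<M. exp (- huber (\<alpha> * x j)) / (\<tau>\<^sup>2 + (x j)\<^sup>2)\<^sup>2)
       * (if ereal (l1norm M x) \<le> R then 1 else 0)"

definition prior_const :: "nat \<Rightarrow> real \<Rightarrow> real \<Rightarrow> ereal \<Rightarrow> real" where
  "prior_const M \<alpha> \<tau> R = (\<integral>x. prior_unnorm M \<alpha> \<tau> R x \<partial>lebM M)"

definition prior_dens :: "nat \<Rightarrow> real \<Rightarrow> real \<Rightarrow> ereal \<Rightarrow> (nat \<Rightarrow> real) \<Rightarrow> real" where
  "prior_dens M \<alpha> \<tau> R x = prior_unnorm M \<alpha> \<tau> R x / prior_const M \<alpha> \<tau> R"

definition sparsity_prior :: "nat \<Rightarrow> real \<Rightarrow> real \<Rightarrow> ereal \<Rightarrow> (nat \<Rightarrow> real) measure" where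
  "sparsity_prior M \<alpha> \<tau> R = density (lebM M) (\<lambda>x. ennreal (prior_dens M \<alpha> \<tau> R x))"

definition p0_unnorm :: "nat \<Rightarrow> real \<Rightarrow> real \<Rightarrow> ereal \<Rightarrow> (nat \<Rightarrow> real) \<Rightarrow> (nat \<Rightarrow> real) \<Rightarrow> real" where
  "p0_unnorm M \<alpha> \<tau> R ls x =
     prior_dens M \<alpha> \<tau> R (\<lambda>j. x j - ls j)
       * (if l1norm M (\<lambda>j. x j - ls j) \<le> 2 * real M * \<tau> then 1 else 0)"

definition p0 :: "nat \<Rightarrow> real \<Rightarrow> real \<Rightarrow> ereal \<Rightarrow> (nat \<Rightarrow> real) \<Rightarrow> (nat \<Rightarrow> real) measure" where
  "p0 M \<alpha> \<tau> R ls = density (lebM M)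
     (\<lambda>x. ennreal (p0_unnorm M \<alpha> \<tau> R ls x / (\<integral>y. p0_unnorm M \<alpha> \<tau> R ls y \<partial>lebM M)))"

end

theory Submission
  imports Defs "HOL-Real_Asymp.Real_Asymp"
begin

text \<open>
  On its support the prior density is exp(- \<Sum>j huber(\<alpha> \<lambda>j)) times the product envelope
  \<Prod>j \<tau>^2 / (\<tau>^2 + \<lambda>j^2)^2, whose one-dimensional factors have mass \<pi>/(2\<tau>), first
  absolute moment at most \<tau> times that and second moment exactly \<tau>^2 times that. By Markov's
  inequality the l1-ball of radius 2M\<tau> carries half of the envelope's mass, and on that ball the
  condition \<alpha> \<le> 1/(4M\<tau>) keeps the Huber factor above exp(-1/4). Hence the normaliser of p0
  relative to the prior is at least exp(-1/4)/2, which bounds the second moment of p0 by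
  2 exp(1/4) \<tau>^2. For the divergence, the log-density ratio of p0 to the prior compares the prior
  at \<lambda> - \<lambda>* and at \<lambda>: the Huber function is 2-Lipschitz, Peetre's inequality
  \<tau>^2 + v^2 \<le> (\<tau>^2 + u^2) (1 + |u - v|/\<tau>)^2 controls the envelope, and the normaliser costs
  at most 2.
\<close>

lemma integral_lborel_FTC_nonneg:
  fixes f F :: "real \<Rightarrow> real"
  assumes deriv: "\<And>x. (F has_real_derivative f x) (at x)"
    and cont: "\<And>x. isCont f x" and nonneg: "\<And>x. 0 \<le> f x"
    and bot: "(F \<longlongrightarrow> A) at_bot" and top: "(F \<longlongrightarrow> B) at_top"
  shows "integrable lborel f" "integral\<^sup>L lborel f = B - A"
proof -
  have A: "((F \<circ> real_of_ereal) \<longlongrightarrow> A) (at_right (-\<infinity>))"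
    using bot unfolding ereal_tendsto_simps .
  have B: "((F \<circ> real_of_ereal) \<longlongrightarrow> B) (at_left \<infinity>)"
    using top unfolding ereal_tendsto_simps .
  note FTC = interval_integral_FTC_nonneg[of "-\<infinity>" "\<infinity>" F f, OF _ deriv cont _ A B]
  show "integrable lborel f"
    using FTC(1) by (simp add: nonneg einterval_eq_UNIV set_integrable_def)
  show "integral\<^sup>L lborel f = B - A"
    using FTC(2) by (simp add: nonneg einterval_eq_UNIV set_lebesgue_integral_def interval_lebesgue_integral_def)
qed

lemma arctan_scaled_deriv:
  fixes \<tau> :: real
  assumes "\<tau> > 0"
  shows "((\<lambda>x. arctan (x / \<tau>) / \<tau>) has_real_derivative 1 / (\<tau>\<^sup>2 + x\<^sup>2)) (at x)"
proof -
  have "0 < \<tau> * (\<tau> * (\<tau> * \<tau>)) + \<tau> * (\<tau> * (x * x))"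
    using assms by (intro add_pos_nonneg) auto
  then show ?thesis
    using assms by (auto intro!: derivative_eq_intros simp: field_simps power2_eq_square)
qed

lemma
  fixes \<tau> :: real
  assumes "\<tau> > 0"
  shows integrable_inverse_sq_plus: "integrable lborel (\<lambda>x. 1 / (\<tau>\<^sup>2 + x\<^sup>2))"
    and integral_inverse_sq_plus: "integral\<^sup>L lborel (\<lambda>x. 1 / (\<tau>\<^sup>2 + x\<^sup>2)) = pi / \<tau>"
proof -
  have pos: "\<tau>\<^sup>2 + x\<^sup>2 > 0" for x
    using assms by (simp add: add_pos_nonneg)
  have bot: "((\<lambda>x. arctan (x / \<tau>) / \<tau>) \<longlongrightarrow> - (pi / 2) / \<tau>) at_bot"
    by (intro tendsto_intros filterlim_compose[OF tendsto_arctan_at_bot]) (use assms in \<open>real_asymp | simp\<close>)+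
  have top: "((\<lambda>x. arctan (x / \<tau>) / \<tau>) \<longlongrightarrow> (pi / 2) / \<tau>) at_top"
    by (intro tendsto_intros filterlim_compose[OF tendsto_arctan_at_top]) (use assms in \<open>real_asymp | simp\<close>)+
  note FTC = integral_lborel_FTC_nonneg[OF arctan_scaled_deriv[OF assms] _ _ bot top]
  show "integrable lborel (\<lambda>x. 1 / (\<tau>\<^sup>2 + x\<^sup>2))"
    using pos by (intro FTC(1)) (auto intro!: continuous_intros simp: less_imp_le)
  show "integral\<^sup>L lborel (\<lambda>x. 1 / (\<tau>\<^sup>2 + x\<^sup>2)) = pi / \<tau>"
    using pos assms by (subst FTC(2)) (auto intro!: continuous_intros simp: less_imp_le)
qed

lemma
  fixes \<tau> :: real
  assumes "\<tau> > 0"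
  shows integrable_inverse_sq_plus_sq: "integrable lborel (\<lambda>x. 1 / (\<tau>\<^sup>2 + x\<^sup>2)\<^sup>2)"
    and integral_inverse_sq_plus_sq: "integral\<^sup>L lborel (\<lambda>x. 1 / (\<tau>\<^sup>2 + x\<^sup>2)\<^sup>2) = pi / (2 * \<tau> ^ 3)"
proof -
  have pos: "\<tau>\<^sup>2 + x\<^sup>2 > 0" for x
    using assms by (simp add: add_pos_nonneg)
  define F where "F x = (x / (\<tau>\<^sup>2 + x\<^sup>2) + arctan (x / \<tau>) / \<tau>) / (2 * \<tau>\<^sup>2)" for x
  have deriv: "(F has_real_derivative 1 / (\<tau>\<^sup>2 + x\<^sup>2)\<^sup>2) (at x)" for x
  proof -
    define d where "d = \<tau>\<^sup>2 + x\<^sup>2"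
    have d: "d > 0" "x\<^sup>2 = d - \<tau>\<^sup>2"
      using pos[of x] by (simp_all add: d_def)
    have "((\<lambda>x. x / (\<tau>\<^sup>2 + x\<^sup>2)) has_real_derivative (d - 2 * x\<^sup>2) / d\<^sup>2) (at x)"
      using d unfolding d_def by (auto intro!: derivative_eq_intros simp: power2_eq_square)
    then have "(F has_real_derivative ((d - 2 * x\<^sup>2) / d\<^sup>2 + 1 / d) / (2 * \<tau>\<^sup>2)) (at x)"
      unfolding F_def d_def by (intro DERIV_cdivide DERIV_add arctan_scaled_deriv[OF assms])
    also have "((d - 2 * x\<^sup>2) / d\<^sup>2 + 1 / d) / (2 * \<tau>\<^sup>2) = 1 / d\<^sup>2"
      using d(1) assms unfolding d(2) by (simp add: field_simps power2_eq_square)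
    finally show ?thesis
      unfolding d_def .
  qed
  have bot: "(F \<longlongrightarrow> (0 + - (pi / 2) / \<tau>) / (2 * \<tau>\<^sup>2)) at_bot"
    unfolding F_def
    by (intro tendsto_intros filterlim_compose[OF tendsto_arctan_at_bot]) (use assms in \<open>real_asymp | simp\<close>)+
  have top: "(F \<longlongrightarrow> (0 + (pi / 2) / \<tau>) / (2 * \<tau>\<^sup>2)) at_top"
    unfolding F_def
    by (intro tendsto_intros filterlim_compose[OF tendsto_arctan_at_top]) (use assms in \<open>real_asymp | simp\<close>)+
  note FTC = integral_lborel_FTC_nonneg[OF deriv _ _ bot top]
  show "integrable lborel (\<lambda>x. 1 / (\<tau>\<^sup>2 + x\<^sup>2)\<^sup>2)"
    using pos by (intro FTC(1)) (auto intro!: continuous_intros simp: less_imp_le)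
  show "integral\<^sup>L lborel (\<lambda>x. 1 / (\<tau>\<^sup>2 + x\<^sup>2)\<^sup>2) = pi / (2 * \<tau> ^ 3)"
    using pos assms by (subst FTC(2)) (auto intro!: continuous_intros simp: less_imp_le power2_eq_square power3_eq_cube)
qed

definition sq_cauchy :: "real \<Rightarrow> real \<Rightarrow> real" where
  "sq_cauchy \<tau> t = \<tau>\<^sup>2 / (\<tau>\<^sup>2 + t\<^sup>2)\<^sup>2"

lemma borel_measurable_sq_cauchy [measurable]: "sq_cauchy \<tau> \<in> borel_measurable borel"
  unfolding sq_cauchy_def by measurable

lemma sq_cauchy_pos: "\<tau> > 0 \<Longrightarrow> sq_cauchy \<tau> t > 0"
  unfolding sq_cauchy_def by (simp add: add_pos_nonneg)

lemma
  fixes \<tau> :: real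
  assumes "\<tau> > 0"
  shows integrable_sq_cauchy: "integrable lborel (sq_cauchy \<tau>)"
    and integral_sq_cauchy: "integral\<^sup>L lborel (sq_cauchy \<tau>) = pi / (2 * \<tau>)"
proof -
  have eq: "sq_cauchy \<tau> = (\<lambda>x. \<tau>\<^sup>2 * (1 / (\<tau>\<^sup>2 + x\<^sup>2)\<^sup>2))"
    by (simp add: sq_cauchy_def fun_eq_iff)
  show "integrable lborel (sq_cauchy \<tau>)"
    unfolding eq by (rule integrable_mult_right[OF integrable_inverse_sq_plus_sq[OF assms]])
  show "integral\<^sup>L lborel (sq_cauchy \<tau>) = pi / (2 * \<tau>)"
    unfolding eq integral_mult_right_zero integral_inverse_sq_plus_sq[OF assms]
    using assms by (simp add: power2_eq_square power3_eq_cube)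
qed

lemma
  fixes \<tau> :: real
  assumes "\<tau> > 0"
  shows integrable_sq_times_sq_cauchy: "integrable lborel (\<lambda>t. t\<^sup>2 * sq_cauchy \<tau> t)"
    and integral_sq_times_sq_cauchy:
      "integral\<^sup>L lborel (\<lambda>t. t\<^sup>2 * sq_cauchy \<tau> t) = \<tau>\<^sup>2 * (pi / (2 * \<tau>))"
proof -
  have eq: "(\<lambda>t. t\<^sup>2 * sq_cauchy \<tau> t)
      = (\<lambda>t. \<tau>\<^sup>2 * (1 / (\<tau>\<^sup>2 + t\<^sup>2)) - \<tau>\<^sup>2 * \<tau>\<^sup>2 * (1 / (\<tau>\<^sup>2 + t\<^sup>2)\<^sup>2))"
  proof
    fix t
    define d where "d = \<tau>\<^sup>2 + t\<^sup>2"
    have d: "d > 0" "t\<^sup>2 = d - \<tau>\<^sup>2"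
      using assms by (simp_all add: d_def add_pos_nonneg)
    show "t\<^sup>2 * sq_cauchy \<tau> t
        = \<tau>\<^sup>2 * (1 / (\<tau>\<^sup>2 + t\<^sup>2)) - \<tau>\<^sup>2 * \<tau>\<^sup>2 * (1 / (\<tau>\<^sup>2 + t\<^sup>2)\<^sup>2)"
      unfolding sq_cauchy_def d_def[symmetric] d(2) using d(1)
      by (simp add: field_simps power2_eq_square)
  qed
  note int = integrable_inverse_sq_plus[OF assms] integrable_inverse_sq_plus_sq[OF assms]
  show "integrable lborel (\<lambda>t. t\<^sup>2 * sq_cauchy \<tau> t)"
    unfolding eq by (intro Bochner_Integration.integrable_diff integrable_mult_right int)
  show "integral\<^sup>L lborel (\<lambda>t. t\<^sup>2 * sq_cauchy \<tau> t) = \<tau>\<^sup>2 * (pi / (2 * \<tau>))"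
    unfolding eq Bochner_Integration.integral_diff[OF integrable_mult_right[OF int(1)] integrable_mult_right[OF int(2)]]
      integral_mult_right_zero integral_inverse_sq_plus[OF assms] integral_inverse_sq_plus_sq[OF assms]
    using assms by (simp add: power2_eq_square power3_eq_cube)
qed

lemma
  fixes \<tau> :: real
  assumes "\<tau> > 0"
  shows integrable_abs_times_sq_cauchy: "integrable lborel (\<lambda>t. \<bar>t\<bar> * sq_cauchy \<tau> t)"
    and integral_abs_times_sq_cauchy_le:
      "integral\<^sup>L lborel (\<lambda>t. \<bar>t\<bar> * sq_cauchy \<tau> t) \<le> \<tau> * (pi / (2 * \<tau>))"
proof -
  have bound: "\<bar>t\<bar> * sq_cauchy \<tau> t \<le> \<tau> / 2 * (1 / (\<tau>\<^sup>2 + t\<^sup>2))" for t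
  proof -
    define d where "d = \<tau>\<^sup>2 + t\<^sup>2"
    have d: "d > 0"
      using assms by (simp add: d_def add_pos_nonneg)
    have "2 * \<tau> * \<bar>t\<bar> \<le> d"
      using sum_squares_bound[of \<tau> "\<bar>t\<bar>"] by (simp add: d_def)
    then have "(2 * \<tau> * \<bar>t\<bar>) * (\<tau> * d) \<le> d * (\<tau> * d)"
      using d assms by (intro mult_right_mono) auto
    then show ?thesis
      unfolding sq_cauchy_def d_def[symmetric] using d assms
      by (simp add: field_simps power2_eq_square)
  qed
  note int = integrable_mult_right[OF integrable_inverse_sq_plus[OF assms], of "\<tau> / 2"]
  show int_abs: "integrable lborel (\<lambda>t. \<bar>t\<bar> * sq_cauchy \<tau> t)"
  proof (rule Bochner_Integration.integrable_bound[OF int _ AE_I2])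
    fix t
    have "0 \<le> \<bar>t\<bar> * sq_cauchy \<tau> t" "0 \<le> \<tau> / 2 * (1 / (\<tau>\<^sup>2 + t\<^sup>2))"
      using sq_cauchy_pos[OF assms, of t] assms by (simp_all add: add_pos_nonneg less_imp_le)
    then show "norm (\<bar>t\<bar> * sq_cauchy \<tau> t) \<le> norm (\<tau> / 2 * (1 / (\<tau>\<^sup>2 + t\<^sup>2)))"
      using bound[of t] by (simp only: real_norm_def abs_of_nonneg)
  qed simp
  have "integral\<^sup>L lborel (\<lambda>t. \<bar>t\<bar> * sq_cauchy \<tau> t)
      \<le> integral\<^sup>L lborel (\<lambda>t. \<tau> / 2 * (1 / (\<tau>\<^sup>2 + t\<^sup>2)))"
    using int_abs int bound by (rule integral_mono)
  also have "\<dots> = \<tau> * (pi / (2 * \<tau>))"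
    unfolding integral_mult_right_zero integral_inverse_sq_plus[OF assms] using assms by simp
  finally show "integral\<^sup>L lborel (\<lambda>t. \<bar>t\<bar> * sq_cauchy \<tau> t) \<le> \<tau> * (pi / (2 * \<tau>))" .
qed

lemma
  fixes f :: "real \<Rightarrow> real"
  shows integrable_lborel_shift: "integrable lborel (\<lambda>x. f (x - c)) = integrable lborel f"
    and integral_lborel_shift: "integral\<^sup>L lborel (\<lambda>x. f (x - c)) = integral\<^sup>L lborel f"
  using lborel_integrable_real_affine_iff[of 1 f "-c"] lborel_integral_real_affine[of 1 f "-c"]
  by simp_all

lemma product_sigma_finite_lborel: "product_sigma_finite (\<lambda>_. lborel :: real measure)"
  by (simp add: product_sigma_finite_def lborel.sigma_finite_measure_axioms)

lemma sigma_finite_lebM: "sigma_finite_measure (lebM M)"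
  unfolding lebM_def by (intro product_sigma_finite.sigma_finite product_sigma_finite_lborel) auto

lemma
  fixes f :: "nat \<Rightarrow> real \<Rightarrow> real"
  assumes "\<And>j. j < M \<Longrightarrow> integrable lborel (f j)"
  shows integrable_lebM_prod: "integrable (lebM M) (\<lambda>x. \<Prod>j<M. f j (x j))"
    and integral_lebM_prod:
      "integral\<^sup>L (lebM M) (\<lambda>x. \<Prod>j<M. f j (x j)) = (\<Prod>j<M. integral\<^sup>L lborel (f j))"
  using product_sigma_finite.product_integrable_prod[OF product_sigma_finite_lborel, of "{..<M}" f]
    product_sigma_finite.product_integral_prod[OF product_sigma_finite_lborel, of "{..<M}" f] assms
  unfolding lebM_def by auto

definition prior_envelope :: "nat \<Rightarrow> real \<Rightarrow> (nat \<Rightarrow> real) \<Rightarrow> real" where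
  "prior_envelope M \<tau> u = (\<Prod>j<M. sq_cauchy \<tau> (u j))"

lemma prior_envelope_pos: "\<tau> > 0 \<Longrightarrow> prior_envelope M \<tau> u > 0"
  unfolding prior_envelope_def by (simp add: prod_pos sq_cauchy_pos)

lemma
  assumes "\<tau> > 0"
  shows integrable_prior_envelope: "integrable (lebM M) (\<lambda>x. prior_envelope M \<tau> (\<lambda>j. x j - l j))"
    and integral_prior_envelope:
      "integral\<^sup>L (lebM M) (\<lambda>x. prior_envelope M \<tau> (\<lambda>j. x j - l j)) = (pi / (2 * \<tau>)) ^ M"
  using integrable_lebM_prod[of M "\<lambda>j t. sq_cauchy \<tau> (t - l j)"]
    integral_lebM_prod[of M "\<lambda>j t. sq_cauchy \<tau> (t - l j)"]
  by (simp_all add: prior_envelope_def integrable_lborel_shift integral_lborel_shift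
      integrable_sq_cauchy[OF assms] integral_sq_cauchy[OF assms])

lemma
  assumes "\<tau> > 0" and "k < M" and w: "integrable lborel (\<lambda>t. w t * sq_cauchy \<tau> t)"
  shows integrable_prior_envelope_weighted:
      "integrable (lebM M) (\<lambda>x. w (x k - l k) * prior_envelope M \<tau> (\<lambda>j. x j - l j))"
    and integral_prior_envelope_weighted:
      "integral\<^sup>L (lebM M) (\<lambda>x. w (x k - l k) * prior_envelope M \<tau> (\<lambda>j. x j - l j))
        = integral\<^sup>L lborel (\<lambda>t. w t * sq_cauchy \<tau> t) * (pi / (2 * \<tau>)) ^ (M - 1)"
proof -
  define g where "g j = (if j = k then (\<lambda>t. w t * sq_cauchy \<tau> t) else sq_cauchy \<tau>)" for j
  have k: "k \<in> {..<M}"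
    using \<open>k < M\<close> by simp
  have split: "(\<Prod>j<M. h j) = h k * (\<Prod>j\<in>{..<M} - {k}. h' j)"
    if "\<And>j. j \<noteq> k \<Longrightarrow> h j = h' j" for h h' :: "nat \<Rightarrow> real"
    using prod.remove[OF _ k, of h] prod.cong[of "{..<M} - {k}" _ h h'] that by auto
  have eq: "w (x k - l k) * prior_envelope M \<tau> (\<lambda>j. x j - l j) = (\<Prod>j<M. g j (x j - l j))" for x
  proof -
    have "(\<Prod>j<M. g j (x j - l j)) = g k (x k - l k) * (\<Prod>j\<in>{..<M} - {k}. sq_cauchy \<tau> (x j - l j))"
      by (rule split) (simp add: g_def)
    then show ?thesis
      unfolding prior_envelope_def using prod.remove[OF _ k, of "\<lambda>j. sq_cauchy \<tau> (x j - l j)"]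
      by (simp add: g_def)
  qed
  have int_g: "integrable lborel (\<lambda>t. g j (t - l j))" for j
    using w integrable_sq_cauchy[OF assms(1)] integrable_lborel_shift[of "\<lambda>t. w t * sq_cauchy \<tau> t"]
    by (simp add: g_def integrable_lborel_shift)
  show "integrable (lebM M) (\<lambda>x. w (x k - l k) * prior_envelope M \<tau> (\<lambda>j. x j - l j))"
    unfolding eq by (rule integrable_lebM_prod[OF int_g])
  have "(\<Prod>j<M. integral\<^sup>L lborel (\<lambda>t. g j (t - l j)))
      = integral\<^sup>L lborel (\<lambda>t. g k (t - l k)) * (\<Prod>j\<in>{..<M} - {k}. pi / (2 * \<tau>))"
    by (rule split) (simp add: g_def integral_lborel_shift integral_sq_cauchy[OF assms(1)])
  also have "integral\<^sup>L lborel (\<lambda>t. g k (t - l k)) = integral\<^sup>L lborel (\<lambda>t. w t * sq_cauchy \<tau> t)"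
    using integral_lborel_shift[of "\<lambda>t. w t * sq_cauchy \<tau> t"] by (simp add: g_def)
  finally show "integral\<^sup>L (lebM M) (\<lambda>x. w (x k - l k) * prior_envelope M \<tau> (\<lambda>j. x j - l j))
      = integral\<^sup>L lborel (\<lambda>t. w t * sq_cauchy \<tau> t) * (pi / (2 * \<tau>)) ^ (M - 1)"
    unfolding eq integral_lebM_prod[OF int_g] using \<open>k < M\<close> by simp
qed

lemma
  assumes "\<tau> > 0" and "k < M"
  shows integrable_abs_coordinate_prior_envelope:
      "integrable (lebM M) (\<lambda>x. \<bar>x k - l k\<bar> * prior_envelope M \<tau> (\<lambda>j. x j - l j))"
    and integral_abs_coordinate_prior_envelope_le:
      "integral\<^sup>L (lebM M) (\<lambda>x. \<bar>x k - l k\<bar> * prior_envelope M \<tau> (\<lambda>j. x j - l j))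
        \<le> \<tau> * (pi / (2 * \<tau>)) ^ M"
proof -
  note weighted = integrable_abs_times_sq_cauchy[OF assms(1)]
  show "integrable (lebM M) (\<lambda>x. \<bar>x k - l k\<bar> * prior_envelope M \<tau> (\<lambda>j. x j - l j))"
    by (rule integrable_prior_envelope_weighted[OF assms weighted])
  have "integral\<^sup>L lborel (\<lambda>t. \<bar>t\<bar> * sq_cauchy \<tau> t) * (pi / (2 * \<tau>)) ^ (M - 1)
      \<le> \<tau> * (pi / (2 * \<tau>)) * (pi / (2 * \<tau>)) ^ (M - 1)"
    using integral_abs_times_sq_cauchy_le[OF assms(1)] assms(1) by (intro mult_right_mono) auto
  also have "\<dots> = \<tau> * (pi / (2 * \<tau>)) ^ M"
    using \<open>k < M\<close> by (cases M) auto
  finally show "integral\<^sup>L (lebM M) (\<lambda>x. \<bar>x k - l k\<bar> * prior_envelope M \<tau> (\<lambda>j. x j - l j))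
      \<le> \<tau> * (pi / (2 * \<tau>)) ^ M"
    unfolding integral_prior_envelope_weighted[OF assms weighted] .
qed

lemma
  assumes "\<tau> > 0" and "k < M"
  shows integrable_sq_coordinate_prior_envelope:
      "integrable (lebM M) (\<lambda>x. (x k - l k)\<^sup>2 * prior_envelope M \<tau> (\<lambda>j. x j - l j))"
    and integral_sq_coordinate_prior_envelope:
      "integral\<^sup>L (lebM M) (\<lambda>x. (x k - l k)\<^sup>2 * prior_envelope M \<tau> (\<lambda>j. x j - l j))
        = \<tau>\<^sup>2 * (pi / (2 * \<tau>)) ^ M"
proof -
  note weighted = integrable_sq_times_sq_cauchy[OF assms(1)]
  show "integrable (lebM M) (\<lambda>x. (x k - l k)\<^sup>2 * prior_envelope M \<tau> (\<lambda>j. x j - l j))"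
    by (rule integrable_prior_envelope_weighted[OF assms weighted])
  show "integral\<^sup>L (lebM M) (\<lambda>x. (x k - l k)\<^sup>2 * prior_envelope M \<tau> (\<lambda>j. x j - l j))
      = \<tau>\<^sup>2 * (pi / (2 * \<tau>)) ^ M"
    unfolding integral_prior_envelope_weighted[OF assms weighted] integral_sq_times_sq_cauchy[OF assms(1)]
    using \<open>k < M\<close> by (cases M) auto
qed

lemma
  fixes h g :: "'a \<Rightarrow> real"
  assumes h: "integrable N h" "\<And>x. 0 \<le> h x"
    and g: "g \<in> borel_measurable N" "\<And>x. 0 \<le> g x" "integrable N (\<lambda>x. g x * h x)"
    and "t > 0"
  shows integrable_truncated: "integrable N (\<lambda>x. h x * (if g x \<le> t then 1 else 0))"
    and integral_truncated_ge:
      "integral\<^sup>L N h - integral\<^sup>L N (\<lambda>x. g x * h x) / t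
        \<le> integral\<^sup>L N (\<lambda>x. h x * (if g x \<le> t then 1 else 0))"
proof -
  show int: "integrable N (\<lambda>x. h x * (if g x \<le> t then 1 else 0))"
    using h g by (intro Bochner_Integration.integrable_bound[OF h(1)]) (auto intro!: AE_I2)
  have "h x - g x * h x / t \<le> h x * (if g x \<le> t then 1 else 0)" for x
  proof (cases "g x \<le> t")
    case False
    then have "h x * t \<le> g x * h x"
      using h(2)[of x] False by (simp add: mult_right_mono mult.commute)
    then show ?thesis
      using False \<open>t > 0\<close> h(2)[of x] by (simp add: field_simps)
  qed (use h(2) g(2) \<open>t > 0\<close> in simp)
  then have "integral\<^sup>L N (\<lambda>x. h x - g x * h x / t) \<le> integral\<^sup>L N (\<lambda>x. h x * (if g x \<le> t then 1 else 0))"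
    using h g int by (intro integral_mono) auto
  then show "integral\<^sup>L N h - integral\<^sup>L N (\<lambda>x. g x * h x) / t
      \<le> integral\<^sup>L N (\<lambda>x. h x * (if g x \<le> t then 1 else 0))"
    using h g by simp
qed

lemma l1norm_nonneg: "l1norm M u \<ge> 0"
  unfolding l1norm_def by (intro sum_nonneg) auto

lemma abs_le_l1norm: "j < M \<Longrightarrow> \<bar>u j\<bar> \<le> l1norm M u"
  unfolding l1norm_def by (rule member_le_sum) auto

lemma l1norm_le_shift: "l1norm M x \<le> l1norm M (\<lambda>j. x j - l j) + l1norm M l"
  unfolding l1norm_def sum.distrib[symmetric] by (intro sum_mono) (metis abs_triangle_ineq diff_add_cancel)

lemma borel_measurable_l1norm_shift [measurable]:
  "(\<lambda>x. l1norm M (\<lambda>j. x j - l j)) \<in> borel_measurable (lebM M)"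
  unfolding lebM_def l1norm_def by measurable

lemma borel_measurable_l1_ball_indicator [measurable]:
  "(\<lambda>x. if l1norm M (\<lambda>j. x j - l j) \<le> r then 1 else (0::real)) \<in> borel_measurable (lebM M)"
  unfolding lebM_def l1norm_def by measurable

lemma prior_envelope_mass_in_l1_ball:
  assumes "\<tau> > 0" and "M > 0"
  shows "integrable (lebM M) (\<lambda>x. prior_envelope M \<tau> (\<lambda>j. x j - l j)
      * (if l1norm M (\<lambda>j. x j - l j) \<le> 2 * real M * \<tau> then 1 else 0))"
    and "(pi / (2 * \<tau>)) ^ M / 2 \<le> integral\<^sup>L (lebM M) (\<lambda>x. prior_envelope M \<tau> (\<lambda>j. x j - l j)
      * (if l1norm M (\<lambda>j. x j - l j) \<le> 2 * real M * \<tau> then 1 else 0))"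
proof -
  let ?trunc = "\<lambda>x. prior_envelope M \<tau> (\<lambda>j. x j - l j)
      * (if l1norm M (\<lambda>j. x j - l j) \<le> 2 * real M * \<tau> then 1 else 0)"
  let ?h = "\<lambda>x. prior_envelope M \<tau> (\<lambda>j. x j - l j)"
  let ?g = "\<lambda>x. l1norm M (\<lambda>j. x j - l j)"
  have split: "?g x * ?h x = (\<Sum>k<M. \<bar>x k - l k\<bar> * ?h x)" for x
    unfolding l1norm_def by (simp add: sum_distrib_right)
  have int_gh: "integrable (lebM M) (\<lambda>x. ?g x * ?h x)"
    unfolding split using integrable_abs_coordinate_prior_envelope[OF assms(1)] by auto
  have "integral\<^sup>L (lebM M) (\<lambda>x. ?g x * ?h x) \<le> (\<Sum>k<M. \<tau> * (pi / (2 * \<tau>)) ^ M)"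
    unfolding split using integrable_abs_coordinate_prior_envelope[OF assms(1)]
    by (subst Bochner_Integration.integral_sum)
      (auto intro!: sum_mono integral_abs_coordinate_prior_envelope_le[OF assms(1)] simp del: sum_constant)
  then have "(pi / (2 * \<tau>)) ^ M / 2
      \<le> integral\<^sup>L (lebM M) ?h - integral\<^sup>L (lebM M) (\<lambda>x. ?g x * ?h x) / (2 * real M * \<tau>)"
    using assms by (simp add: integral_prior_envelope field_simps)
  also have "\<dots> \<le> integral\<^sup>L (lebM M) ?trunc"
    using assms prior_envelope_pos[OF assms(1)]
    by (intro integral_truncated_ge[OF integrable_prior_envelope[OF assms(1)] _
        borel_measurable_l1norm_shift _ int_gh]) (auto simp: less_imp_le l1norm_nonneg)
  finally show "(pi / (2 * \<tau>)) ^ M / 2 \<le> integral\<^sup>L (lebM M) ?trunc" .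
  show "integrable (lebM M) ?trunc"
    using assms prior_envelope_pos[OF assms(1)]
    by (intro integrable_truncated[OF integrable_prior_envelope[OF assms(1)] _
        borel_measurable_l1norm_shift _ int_gh]) (auto simp: less_imp_le l1norm_nonneg)
qed

lemma huber_nonneg: "huber t \<ge> 0"
  unfolding huber_def by auto

lemma huber_le_half_abs:
  assumes "\<bar>t\<bar> \<le> 1 / 2"
  shows "huber t \<le> \<bar>t\<bar> / 2"
proof -
  have "t\<^sup>2 = \<bar>t\<bar> * \<bar>t\<bar>"
    by (simp add: power2_eq_square)
  also have "\<dots> \<le> \<bar>t\<bar> * (1 / 2)"
    using assms by (intro mult_left_mono) auto
  finally show ?thesis
    using assms unfolding huber_def by auto
qed

lemma huber_diff_le: "huber a - huber b \<le> 2 * \<bar>a - b\<bar>"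
proof -
  have tri: "\<bar>a\<bar> - \<bar>b\<bar> \<le> \<bar>a - b\<bar>" "\<bar>b\<bar> - \<bar>a\<bar> \<le> \<bar>a - b\<bar>"
    by (rule abs_triangle_ineq2, metis abs_minus_commute abs_triangle_ineq2)
  consider "\<bar>a\<bar> \<le> 1" "\<bar>b\<bar> \<le> 1" | "\<bar>a\<bar> \<le> 1" "\<bar>b\<bar> > 1"
    | "\<bar>a\<bar> > 1" "\<bar>b\<bar> \<le> 1" | "\<bar>a\<bar> > 1" "\<bar>b\<bar> > 1"
    by linarith
  then show ?thesis
  proof cases
    case 1
    have "a\<^sup>2 - b\<^sup>2 = (a - b) * (a + b)"
      by (simp add: power2_eq_square algebra_simps)
    also have "\<dots> \<le> \<bar>a - b\<bar> * \<bar>a + b\<bar>"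
      by (metis abs_ge_self abs_mult)
    also have "\<dots> \<le> \<bar>a - b\<bar> * 2"
      using 1 by (intro mult_left_mono) auto
    finally show ?thesis
      using 1 by (simp add: huber_def)
  next
    case 2
    have "a\<^sup>2 \<le> 1"
      using power_le_one[of "\<bar>a\<bar>" 2] 2 by simp
    then show ?thesis
      using 2 tri by (simp add: huber_def)
  next
    case 3
    have "2 * \<bar>b\<bar> \<le> 1 + b\<^sup>2"
      using sum_squares_bound[of 1 "\<bar>b\<bar>"] by simp
    then show ?thesis
      using 3 tri by (simp add: huber_def)
  next
    case 4
    then show ?thesis
      using tri by (simp add: huber_def)
  qed
qed

lemma peetre_inequality:
  fixes \<tau> u v :: real
  assumes "\<tau> > 0"
  shows "\<tau>\<^sup>2 + v\<^sup>2 \<le> (\<tau>\<^sup>2 + u\<^sup>2) * (1 + \<bar>u - v\<bar> / \<tau>)\<^sup>2"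
proof -
  define d where "d = \<bar>u - v\<bar>"
  have d: "d \<ge> 0" "\<bar>v\<bar> \<le> \<bar>u\<bar> + d"
    unfolding d_def by linarith+
  have "v\<^sup>2 \<le> (\<bar>u\<bar> + d)\<^sup>2"
    using d by (metis abs_ge_zero power2_abs power_mono)
  also have "\<dots> = u\<^sup>2 + 2 * d * \<bar>u\<bar> + d\<^sup>2"
    by (simp add: power2_eq_square algebra_simps)
  also have "2 * d * \<bar>u\<bar> \<le> 2 * d * ((\<tau>\<^sup>2 + u\<^sup>2) / \<tau>)"
  proof -
    have "2 * (\<bar>u\<bar> * \<tau>) \<le> \<tau>\<^sup>2 + u\<^sup>2" "0 \<le> \<bar>u\<bar> * \<tau>"
      using sum_squares_bound[of \<tau> "\<bar>u\<bar>"] assms by (simp_all add: mult_ac)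
    then have "\<bar>u\<bar> * \<tau> \<le> \<tau>\<^sup>2 + u\<^sup>2"
      by linarith
    then have "\<bar>u\<bar> \<le> (\<tau>\<^sup>2 + u\<^sup>2) / \<tau>"
      using assms by (simp add: field_simps)
    then show ?thesis
      using d by (intro mult_left_mono) auto
  qed
  also have "d\<^sup>2 \<le> (\<tau>\<^sup>2 + u\<^sup>2) * (d / \<tau>)\<^sup>2"
  proof -
    have "d\<^sup>2 = \<tau>\<^sup>2 * (d / \<tau>)\<^sup>2"
      using assms by (simp add: power2_eq_square)
    also have "\<dots> \<le> (\<tau>\<^sup>2 + u\<^sup>2) * (d / \<tau>)\<^sup>2"
      by (intro mult_right_mono) auto
    finally show ?thesis .
  qed
  finally have "v\<^sup>2 \<le> u\<^sup>2 + 2 * d * ((\<tau>\<^sup>2 + u\<^sup>2) / \<tau>) + (\<tau>\<^sup>2 + u\<^sup>2) * (d / \<tau>)\<^sup>2"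
    by simp
  also have "\<dots> = (\<tau>\<^sup>2 + u\<^sup>2) * (1 + d / \<tau>)\<^sup>2 - \<tau>\<^sup>2"
    using assms by (simp add: power2_eq_square field_simps)
  finally show ?thesis
    unfolding d_def by simp
qed

lemma ln_sq_cauchy_diff_le:
  assumes "\<tau> > 0"
  shows "ln (sq_cauchy \<tau> u) - ln (sq_cauchy \<tau> v) \<le> 4 * ln (1 + \<bar>u - v\<bar> / \<tau>)"
proof -
  have pos: "\<tau>\<^sup>2 + t\<^sup>2 > 0" for t
    using assms by (simp add: add_pos_nonneg)
  have c: "1 + \<bar>u - v\<bar> / \<tau> > 0"
    using assms by (simp add: add_pos_nonneg)
  have "ln (\<tau>\<^sup>2 + v\<^sup>2) \<le> ln ((\<tau>\<^sup>2 + u\<^sup>2) * (1 + \<bar>u - v\<bar> / \<tau>)\<^sup>2)"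
    using peetre_inequality[OF assms, of v u] pos c by (subst ln_le_cancel_iff) auto
  also have "\<dots> = ln (\<tau>\<^sup>2 + u\<^sup>2) + 2 * ln (1 + \<bar>u - v\<bar> / \<tau>)"
    using pos c by (simp add: ln_mult ln_realpow)
  finally show ?thesis
    unfolding sq_cauchy_def using pos assms by (simp add: ln_div ln_realpow)
qed

lemma prior_unnorm_eq:
  assumes "ereal (l1norm M u) \<le> R"
  shows "prior_unnorm M \<alpha> \<tau> R u = exp (- (\<Sum>j<M. huber (\<alpha> * u j))) * prior_envelope M \<tau> u"
proof -
  have "(\<Prod>j<M. exp (- huber (\<alpha> * u j)) * sq_cauchy \<tau> (u j))
      = (\<Prod>j<M. exp (- huber (\<alpha> * u j)) / (\<tau>\<^sup>2 + (u j)\<^sup>2)\<^sup>2 * \<tau>\<^sup>2)"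
    by (simp add: sq_cauchy_def)
  also have "\<dots> = \<tau> ^ (2 * M) * (\<Prod>j<M. exp (- huber (\<alpha> * u j)) / (\<tau>\<^sup>2 + (u j)\<^sup>2)\<^sup>2)"
    unfolding prod.distrib prod_constant card_lessThan power_mult by (rule mult.commute)
  moreover have "exp (- (\<Sum>j<M. huber (\<alpha> * u j))) = (\<Prod>j<M. exp (- huber (\<alpha> * u j)))"
    by (simp add: exp_sum[symmetric] sum_negf)
  ultimately show ?thesis
    using assms by (simp add: prior_unnorm_def prior_envelope_def prod.distrib)
qed

lemma prior_unnorm_outside: "\<not> ereal (l1norm M u) \<le> R \<Longrightarrow> prior_unnorm M \<alpha> \<tau> R u = 0"
  by (simp add: prior_unnorm_def)

lemma
  assumes "\<tau> > 0"
  shows prior_unnorm_nonneg: "0 \<le> prior_unnorm M \<alpha> \<tau> R u"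
    and prior_unnorm_le_envelope: "prior_unnorm M \<alpha> \<tau> R u \<le> prior_envelope M \<tau> u"
proof -
  have "exp (- (\<Sum>j<M. huber (\<alpha> * u j))) \<le> 1"
    using sum_nonneg[of "{..<M}" "\<lambda>j. huber (\<alpha> * u j)"] huber_nonneg by simp
  then have "0 \<le> exp (- (\<Sum>j<M. huber (\<alpha> * u j))) * prior_envelope M \<tau> u"
    "exp (- (\<Sum>j<M. huber (\<alpha> * u j))) * prior_envelope M \<tau> u \<le> prior_envelope M \<tau> u"
    using prior_envelope_pos[OF assms, of M u] by (auto intro!: mult_left_le_one_le)
  then show "0 \<le> prior_unnorm M \<alpha> \<tau> R u" "prior_unnorm M \<alpha> \<tau> R u \<le> prior_envelope M \<tau> u"
    using prior_envelope_pos[OF assms, of M u]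
    by (cases "ereal (l1norm M u) \<le> R"; simp add: prior_unnorm_eq prior_unnorm_outside)+
qed

lemma prior_unnorm_pos:
  assumes "\<tau> > 0" and "ereal (l1norm M u) \<le> R"
  shows "prior_unnorm M \<alpha> \<tau> R u > 0"
  using prior_envelope_pos[OF assms(1)] by (simp add: prior_unnorm_eq[OF assms(2)])

lemma prior_unnorm_ge_on_l1_ball:
  assumes "\<tau> > 0" and "\<alpha> > 0" and "\<alpha> \<le> 1 / (4 * real M * \<tau>)"
    and "ereal (2 * real M * \<tau>) \<le> R" and u: "l1norm M u \<le> 2 * real M * \<tau>"
  shows "exp (- 1 / 4) * prior_envelope M \<tau> u \<le> prior_unnorm M \<alpha> \<tau> R u"
proof -
  have M: "M > 0"
    using assms(2,3) by (cases M) auto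
  have small: "\<alpha> * l1norm M u \<le> 1 / 2"
  proof -
    have "\<alpha> * l1norm M u \<le> \<alpha> * (2 * real M * \<tau>)"
      using u assms(2) by (intro mult_left_mono) auto
    also have "\<dots> \<le> 1 / 2"
      using assms(1,3) M by (simp add: field_simps)
    finally show ?thesis .
  qed
  have "huber (\<alpha> * u j) \<le> \<alpha> * \<bar>u j\<bar> / 2" if "j < M" for j
  proof (rule order_trans[OF huber_le_half_abs])
    have "\<alpha> * \<bar>u j\<bar> \<le> \<alpha> * l1norm M u"
      using abs_le_l1norm[OF that] assms(2) by (intro mult_left_mono) auto
    then have "\<alpha> * \<bar>u j\<bar> \<le> 1 / 2"
      using small by linarith
    then show "\<bar>\<alpha> * u j\<bar> \<le> 1 / 2"
      using assms(2) by (simp add: abs_mult)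
  qed (use assms(2) in \<open>simp add: abs_mult\<close>)
  then have "(\<Sum>j<M. huber (\<alpha> * u j)) \<le> (\<Sum>j<M. \<alpha> * \<bar>u j\<bar> / 2)"
    by (intro sum_mono) auto
  also have "\<dots> = \<alpha> * l1norm M u / 2"
    by (simp add: l1norm_def sum_distrib_left sum_divide_distrib)
  finally have "exp (- 1 / 4) \<le> exp (- (\<Sum>j<M. huber (\<alpha> * u j)))"
    using small by simp
  moreover have "ereal (l1norm M u) \<le> R"
    using u assms(4) by (metis ereal_less_eq(3) order_trans)
  ultimately show ?thesis
    using prior_envelope_pos[OF assms(1), of M u] by (simp add: prior_unnorm_eq)
qed

lemma ln_prior_unnorm_diff_le:
  assumes "\<tau> > 0" and "\<alpha> \<ge> 0" and "ereal (l1norm M u) \<le> R" and "ereal (l1norm M v) \<le> R"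
  shows "ln (prior_unnorm M \<alpha> \<tau> R u) - ln (prior_unnorm M \<alpha> \<tau> R v)
    \<le> (\<Sum>j<M. 2 * \<alpha> * \<bar>u j - v j\<bar> + 4 * ln (1 + \<bar>u j - v j\<bar> / \<tau>))"
proof -
  have ln_eq: "ln (prior_unnorm M \<alpha> \<tau> R w) = (\<Sum>j<M. ln (sq_cauchy \<tau> (w j)) - huber (\<alpha> * w j))"
    if "ereal (l1norm M w) \<le> R" for w
  proof -
    have "ln (prior_envelope M \<tau> w) = (\<Sum>j<M. ln (sq_cauchy \<tau> (w j)))"
      unfolding prior_envelope_def using sq_cauchy_pos[OF assms(1)] by (intro ln_prod) (auto simp: less_imp_neq[symmetric])
    then show ?thesis
      using prior_envelope_pos[OF assms(1), of M w]
      by (simp add: prior_unnorm_eq[OF that] ln_mult sum_subtractf)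
  qed
  have "(ln (sq_cauchy \<tau> (u j)) - huber (\<alpha> * u j)) - (ln (sq_cauchy \<tau> (v j)) - huber (\<alpha> * v j))
      \<le> 2 * \<alpha> * \<bar>u j - v j\<bar> + 4 * ln (1 + \<bar>u j - v j\<bar> / \<tau>)" for j
  proof -
    have "huber (\<alpha> * v j) - huber (\<alpha> * u j) \<le> 2 * \<bar>\<alpha> * v j - \<alpha> * u j\<bar>"
      by (rule huber_diff_le)
    also have "\<bar>\<alpha> * v j - \<alpha> * u j\<bar> = \<alpha> * \<bar>u j - v j\<bar>"
      using assms(2) by (simp add: abs_mult right_diff_distrib[symmetric] abs_minus_commute)
    finally show ?thesis
      using ln_sq_cauchy_diff_le[OF assms(1), of "u j" "v j"] by linarith
  qed
  then show ?thesis
    unfolding ln_eq[OF assms(3)] ln_eq[OF assms(4)] sum_subtractf[symmetric] by (rule sum_mono)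
qed

lemma integral_density_le:
  fixes q h f :: "'a \<Rightarrow> real"
  assumes q: "q \<in> borel_measurable N" "\<And>x. 0 \<le> q x" "\<And>x. q x \<le> h x"
    and f: "f \<in> borel_measurable N" "\<And>x. 0 \<le> f x" "integrable N (\<lambda>x. f x * h x)"
  shows "integral\<^sup>L (density N q) f \<le> integral\<^sup>L N (\<lambda>x. f x * h x)"
proof -
  have "integral\<^sup>L (density N q) f = integral\<^sup>L N (\<lambda>x. q x * f x)"
    using q f by (subst integral_density) auto
  also have "\<dots> \<le> integral\<^sup>L N (\<lambda>x. f x * h x)"
  proof (cases "integrable N (\<lambda>x. q x * f x)")
    case True
    then show ?thesis
      using q f by (intro integral_mono) (auto simp: mult.commute mult_left_mono)
  next
    case False
    then show ?thesis
      using q f by (simp add: not_integrable_integral_eq order_trans[OF q(2,3)])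
  qed
  finally show ?thesis .
qed

lemma (in sigma_finite_measure) KL_density_density_le:
  fixes p q :: "'a \<Rightarrow> real"
  assumes "1 < b"
    and p: "p \<in> borel_measurable M" "\<And>x. 0 \<le> p x"
    and q: "q \<in> borel_measurable M" "\<And>x. 0 \<le> q x" "integrable M q" "integral\<^sup>L M q = 1"
    and support: "\<And>x. q x \<noteq> 0 \<Longrightarrow> p x \<noteq> 0"
    and bound: "\<And>x. q x \<noteq> 0 \<Longrightarrow> log b (q x / p x) \<le> c" and "0 \<le> c"
  shows "KL_divergence b (density M p) (density M q) \<le> c"
proof -
  have "KL_divergence b (density M p) (density M q) = integral\<^sup>L M (\<lambda>x. q x * log b (q x / p x))"
    using p q support by (intro KL_density_density[OF \<open>1 < b\<close>]) auto
  also have "\<dots> \<le> c"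
  proof (cases "integrable M (\<lambda>x. q x * log b (q x / p x))")
    case True
    have "q x * log b (q x / p x) \<le> c * q x" for x
      using bound[of x] q(2)[of x] by (cases "q x = 0") (auto simp: mult.commute mult_left_mono)
    then have "integral\<^sup>L M (\<lambda>x. q x * log b (q x / p x)) \<le> integral\<^sup>L M (\<lambda>x. c * q x)"
      using True q(3) by (intro integral_mono) auto
    then show ?thesis
      using q(4) by simp
  qed (simp add: not_integrable_integral_eq \<open>0 \<le> c\<close>)
  finally show ?thesis .
qed

lemma borel_measurable_prior_unnorm_shift [measurable]:
  "(\<lambda>x. prior_unnorm M \<alpha> \<tau> R (\<lambda>j. x j - l j)) \<in> borel_measurable (lebM M)"
  unfolding lebM_def prior_unnorm_def huber_def l1norm_def by measurable

lemma borel_measurable_prior_dens [measurable]: "prior_dens M \<alpha> \<tau> R \<in> borel_measurable (lebM M)"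
  unfolding lebM_def prior_dens_def prior_unnorm_def huber_def l1norm_def by measurable

lemma borel_measurable_p0_unnorm [measurable]: "p0_unnorm M \<alpha> \<tau> R l \<in> borel_measurable (lebM M)"
  unfolding lebM_def p0_unnorm_def prior_dens_def prior_unnorm_def huber_def l1norm_def by measurable

lemma integrable_prior_unnorm_shift:
  assumes "\<tau> > 0"
  shows "integrable (lebM M) (\<lambda>x. prior_unnorm M \<alpha> \<tau> R (\<lambda>j. x j - l j))"
  using prior_unnorm_nonneg[OF assms] prior_unnorm_le_envelope[OF assms]
  by (intro Bochner_Integration.integrable_bound[OF integrable_prior_envelope[OF assms, of M l]])
    (auto intro!: AE_I2 simp: abs_of_pos[OF prior_envelope_pos[OF assms]])

locale sparsity_prior_setting =
  fixes M :: nat and \<alpha> \<tau> :: real and R :: ereal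
  assumes tau_pos: "\<tau> > 0" and alpha_pos: "\<alpha> > 0" and alpha_le: "\<alpha> \<le> 1 / (4 * real M * \<tau>)"
    and radius_ge: "ereal (2 * real M * \<tau>) \<le> R"
begin

lemma M_pos: "M > 0"
  using alpha_pos alpha_le by (cases M) auto

lemma
  shows integrable_prior_unnorm_l1_ball:
      "integrable (lebM M) (\<lambda>x. prior_unnorm M \<alpha> \<tau> R (\<lambda>j. x j - l j)
        * (if l1norm M (\<lambda>j. x j - l j) \<le> 2 * real M * \<tau> then 1 else 0))"
    and prior_unnorm_mass_in_l1_ball:
      "exp (- 1 / 4) * (pi / (2 * \<tau>)) ^ M / 2 \<le> integral\<^sup>L (lebM M) (\<lambda>x. prior_unnorm M \<alpha> \<tau> R (\<lambda>j. x j - l j)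
        * (if l1norm M (\<lambda>j. x j - l j) \<le> 2 * real M * \<tau> then 1 else 0))"
proof -
  let ?ind = "\<lambda>x. if l1norm M (\<lambda>j. x j - l j) \<le> 2 * real M * \<tau> then 1 else (0::real)"
  note envelope = prior_envelope_mass_in_l1_ball[OF tau_pos M_pos, of l]
  show int: "integrable (lebM M) (\<lambda>x. prior_unnorm M \<alpha> \<tau> R (\<lambda>j. x j - l j) * ?ind x)"
    using prior_unnorm_nonneg[OF tau_pos]
    by (intro Bochner_Integration.integrable_bound[OF integrable_prior_unnorm_shift[OF tau_pos, of M \<alpha> R l]]
        borel_measurable_times borel_measurable_prior_unnorm_shift borel_measurable_l1_ball_indicator)
      (auto intro!: AE_I2)
  have "exp (- 1 / 4) * (pi / (2 * \<tau>)) ^ M / 2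
      \<le> exp (- 1 / 4) * integral\<^sup>L (lebM M) (\<lambda>x. prior_envelope M \<tau> (\<lambda>j. x j - l j) * ?ind x)"
    using envelope(2) by simp
  also have "\<dots> = integral\<^sup>L (lebM M) (\<lambda>x. exp (- 1 / 4) * (prior_envelope M \<tau> (\<lambda>j. x j - l j) * ?ind x))"
    by simp
  also have "\<dots> \<le> integral\<^sup>L (lebM M) (\<lambda>x. prior_unnorm M \<alpha> \<tau> R (\<lambda>j. x j - l j) * ?ind x)"
    using envelope(1) int prior_unnorm_ge_on_l1_ball[OF tau_pos alpha_pos alpha_le radius_ge]
    by (intro integral_mono) auto
  finally show "exp (- 1 / 4) * (pi / (2 * \<tau>)) ^ M / 2
      \<le> integral\<^sup>L (lebM M) (\<lambda>x. prior_unnorm M \<alpha> \<tau> R (\<lambda>j. x j - l j) * ?ind x)" .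
qed

lemma prior_const_bounds:
  "0 < prior_const M \<alpha> \<tau> R" "prior_const M \<alpha> \<tau> R \<le> (pi / (2 * \<tau>)) ^ M"
proof -
  have const: "prior_const M \<alpha> \<tau> R = integral\<^sup>L (lebM M) (\<lambda>x. prior_unnorm M \<alpha> \<tau> R (\<lambda>j. x j - 0))"
    by (simp add: prior_const_def)
  have "0 < exp (- 1 / 4) * (pi / (2 * \<tau>)) ^ M / 2"
    using tau_pos by simp
  also have "\<dots> \<le> integral\<^sup>L (lebM M) (\<lambda>x. prior_unnorm M \<alpha> \<tau> R (\<lambda>j. x j - 0)
      * (if l1norm M (\<lambda>j. x j - 0) \<le> 2 * real M * \<tau> then 1 else 0))"
    by (rule prior_unnorm_mass_in_l1_ball)
  also have "\<dots> \<le> prior_const M \<alpha> \<tau> R"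
    unfolding const
    using integrable_prior_unnorm_l1_ball[of "\<lambda>_. 0"] integrable_prior_unnorm_shift[OF tau_pos, of M \<alpha> R "\<lambda>_. 0"]
    by (intro integral_mono) (auto simp: prior_unnorm_nonneg[OF tau_pos])
  finally show "0 < prior_const M \<alpha> \<tau> R" .
  show "prior_const M \<alpha> \<tau> R \<le> (pi / (2 * \<tau>)) ^ M"
    unfolding const integral_prior_envelope[OF tau_pos, of M "\<lambda>_. 0", symmetric]
    using integrable_prior_unnorm_shift[OF tau_pos, of M \<alpha> R "\<lambda>_. 0"] integrable_prior_envelope[OF tau_pos, of M "\<lambda>_. 0"]
    by (intro integral_mono) (auto simp: prior_unnorm_le_envelope[OF tau_pos])
qed

lemma
  shows integrable_p0_unnorm: "integrable (lebM M) (p0_unnorm M \<alpha> \<tau> R l)"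
    and integral_p0_unnorm: "integral\<^sup>L (lebM M) (p0_unnorm M \<alpha> \<tau> R l)
      = integral\<^sup>L (lebM M) (\<lambda>x. prior_unnorm M \<alpha> \<tau> R (\<lambda>j. x j - l j)
          * (if l1norm M (\<lambda>j. x j - l j) \<le> 2 * real M * \<tau> then 1 else 0)) / prior_const M \<alpha> \<tau> R"
  using integrable_divide[OF integrable_prior_unnorm_l1_ball[of l], of "prior_const M \<alpha> \<tau> R"]
  unfolding p0_unnorm_def prior_dens_def by simp_all

lemma integral_p0_unnorm_ge: "exp (- 1 / 4) / 2 \<le> integral\<^sup>L (lebM M) (p0_unnorm M \<alpha> \<tau> R l)"
proof -
  have "exp (- 1 / 4) / 2 = exp (- 1 / 4) * (pi / (2 * \<tau>)) ^ M / 2 / (pi / (2 * \<tau>)) ^ M"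
    using tau_pos by simp
  also have "\<dots> \<le> exp (- 1 / 4) * (pi / (2 * \<tau>)) ^ M / 2 / prior_const M \<alpha> \<tau> R"
    using prior_const_bounds by (intro divide_left_mono) auto
  also have "\<dots> \<le> integral\<^sup>L (lebM M) (p0_unnorm M \<alpha> \<tau> R l)"
    unfolding integral_p0_unnorm using prior_const_bounds(1)
    by (intro divide_right_mono prior_unnorm_mass_in_l1_ball) auto
  finally show ?thesis .
qed

lemma p0_second_moment_le:
  assumes "k < M"
  shows "(\<integral>x. (x k - l k)\<^sup>2 \<partial>p0 M \<alpha> \<tau> R l) \<le> 2 * exp (1 / 4) * \<tau>\<^sup>2"
proof -
  define C where "C = prior_const M \<alpha> \<tau> R"
  define K where "K = (pi / (2 * \<tau>)) ^ M"
  define W where "W = integral\<^sup>L (lebM M) (\<lambda>x. prior_unnorm M \<alpha> \<tau> R (\<lambda>j. x j - l j)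
      * (if l1norm M (\<lambda>j. x j - l j) \<le> 2 * real M * \<tau> then 1 else 0))"
  have W: "exp (- 1 / 4) * K / 2 \<le> W"
    unfolding W_def K_def by (rule prior_unnorm_mass_in_l1_ball)
  have CK: "0 < C" "0 < K"
    using prior_const_bounds(1) tau_pos unfolding C_def K_def by auto
  then have pos: "0 < C" "0 < K" "0 < W"
    using W by (auto intro: less_le_trans[OF _ W])
  have dens: "p0_unnorm M \<alpha> \<tau> R l x / (W / C) \<le> prior_envelope M \<tau> (\<lambda>j. x j - l j) / W" for x
    using pos prior_unnorm_le_envelope[OF tau_pos, of M \<alpha> R "\<lambda>j. x j - l j"]
      prior_unnorm_nonneg[OF tau_pos, of M \<alpha> R "\<lambda>j. x j - l j"]
    by (auto simp: p0_unnorm_def prior_dens_def C_def[symmetric] field_simps)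
  have "(\<integral>x. (x k - l k)\<^sup>2 \<partial>p0 M \<alpha> \<tau> R l)
      \<le> integral\<^sup>L (lebM M) (\<lambda>x. (x k - l k)\<^sup>2 * (prior_envelope M \<tau> (\<lambda>j. x j - l j) / W))"
    unfolding p0_def integral_p0_unnorm W_def[symmetric] C_def[symmetric]
  proof (rule integral_density_le)
    show "(\<lambda>x. p0_unnorm M \<alpha> \<tau> R l x / (W / C)) \<in> borel_measurable (lebM M)"
      by measurable
    show "0 \<le> p0_unnorm M \<alpha> \<tau> R l x / (W / C)" for x
      using pos prior_unnorm_nonneg[OF tau_pos] by (simp add: p0_unnorm_def prior_dens_def C_def[symmetric])
    show "(\<lambda>x. (x k - l k)\<^sup>2) \<in> borel_measurable (lebM M)"
      using measurable_component_singleton[of k "{..<M}" "\<lambda>_. lborel :: real measure"] assms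
      unfolding lebM_def by (intro borel_measurable_power borel_measurable_diff) auto
    show "integrable (lebM M) (\<lambda>x. (x k - l k)\<^sup>2 * (prior_envelope M \<tau> (\<lambda>j. x j - l j) / W))"
      using integrable_divide[OF integrable_sq_coordinate_prior_envelope[OF tau_pos assms, of l], of W]
      by simp
  qed (use dens in auto)
  also have "\<dots> = \<tau>\<^sup>2 * K / W"
    using integral_sq_coordinate_prior_envelope[OF tau_pos assms, of l] unfolding K_def by simp
  also have "\<dots> \<le> \<tau>\<^sup>2 * K / (exp (- 1 / 4) * K / 2)"
    using W pos by (intro divide_left_mono) auto
  also have "\<dots> = 2 * exp (1 / 4) * \<tau>\<^sup>2"
    using pos by (simp add: exp_minus field_simps)
  finally show ?thesis .
qed

lemma p0_unnorm_support:
  assumes l: "ereal (l1norm M l) \<le> R - ereal (2 * real M * \<tau>)" and x: "p0_unnorm M \<alpha> \<tau> R l x \<noteq> 0"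
  shows "l1norm M (\<lambda>j. x j - l j) \<le> 2 * real M * \<tau>"
    and "ereal (l1norm M x) \<le> R" and "ereal (l1norm M (\<lambda>j. x j - l j)) \<le> R"
proof -
  show ball: "l1norm M (\<lambda>j. x j - l j) \<le> 2 * real M * \<tau>"
    using x by (auto simp: p0_unnorm_def split: if_splits)
  have "ereal (l1norm M x) \<le> ereal (l1norm M l + 2 * real M * \<tau>)"
    using l1norm_le_shift[of M x l] ball by simp
  also have "\<dots> \<le> R"
    using l by (cases R) auto
  finally show "ereal (l1norm M x) \<le> R" .
  show "ereal (l1norm M (\<lambda>j. x j - l j)) \<le> R"
    using ball radius_ge by (metis ereal_less_eq(3) order_trans)
qed

lemma log_p0_prior_ratio_le:
  assumes l: "ereal (l1norm M l) \<le> R - ereal (2 * real M * \<tau>)" and x: "p0_unnorm M \<alpha> \<tau> R l x \<noteq> 0"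
  shows "log (exp 1) (p0_unnorm M \<alpha> \<tau> R l x / integral\<^sup>L (lebM M) (p0_unnorm M \<alpha> \<tau> R l)
      / prior_dens M \<alpha> \<tau> R x) \<le> 2 * \<alpha> * l1norm M l + 4 * (\<Sum>j<M. ln (1 + \<bar>l j\<bar> / \<tau>)) + 2"
proof -
  define g where "g = prior_unnorm M \<alpha> \<tau> R"
  define Z where "Z = integral\<^sup>L (lebM M) (p0_unnorm M \<alpha> \<tau> R l)"
  have Z: "exp (- 1 / 4) / 2 \<le> Z"
    unfolding Z_def by (rule integral_p0_unnorm_ge)
  then have Z_pos: "0 < Z"
    by (auto intro: less_le_trans[OF _ Z])
  note support = p0_unnorm_support[OF l x]
  have g_pos: "0 < g x" "0 < g (\<lambda>j. x j - l j)"
    unfolding g_def using prior_unnorm_pos[OF tau_pos] support(2,3) by auto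
  have "p0_unnorm M \<alpha> \<tau> R l x / Z / prior_dens M \<alpha> \<tau> R x = g (\<lambda>j. x j - l j) / (g x * Z)"
    using support(1) prior_const_bounds(1)
    unfolding p0_unnorm_def prior_dens_def g_def[symmetric] by (simp add: field_simps)
  then have "log (exp 1) (p0_unnorm M \<alpha> \<tau> R l x / Z / prior_dens M \<alpha> \<tau> R x)
      = ln (g (\<lambda>j. x j - l j)) - ln (g x) - ln Z"
    using g_pos Z_pos by (simp add: log_def ln_div ln_mult)
  moreover have "ln (g (\<lambda>j. x j - l j)) - ln (g x) \<le> 2 * \<alpha> * l1norm M l + 4 * (\<Sum>j<M. ln (1 + \<bar>l j\<bar> / \<tau>))"
    using ln_prior_unnorm_diff_le[OF tau_pos _ support(3,2), of \<alpha>] alpha_pos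
    unfolding g_def by (simp add: l1norm_def sum.distrib sum_distrib_left)
  moreover have "ln (exp (- 1 / 4) / 2) \<le> ln Z"
    using Z Z_pos by (subst ln_le_cancel_iff) auto
  moreover have "ln (2::real) \<le> 1"
    using ln_le_minus_one[of 2] by simp
  ultimately show ?thesis
    unfolding Z_def[symmetric] by (simp add: ln_div)
qed

lemma KL_p0_le:
  assumes l: "ereal (l1norm M l) \<le> R - ereal (2 * real M * \<tau>)"
  shows "KL_divergence (exp 1) (sparsity_prior M \<alpha> \<tau> R) (p0 M \<alpha> \<tau> R l)
    \<le> 2 * \<alpha> * l1norm M l + 4 * (\<Sum>j<M. ln (1 + \<bar>l j\<bar> / \<tau>)) + 2"
  unfolding sparsity_prior_def p0_def
proof (rule sigma_finite_measure.KL_density_density_le[OF sigma_finite_lebM])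
  define Z where "Z = integral\<^sup>L (lebM M) (p0_unnorm M \<alpha> \<tau> R l)"
  have "0 < exp (- 1 / 4) / (2 :: real)"
    by simp
  then have Z_pos: "0 < Z"
    unfolding Z_def using integral_p0_unnorm_ge by (rule less_le_trans)
  note C = prior_const_bounds(1)
  show "0 \<le> prior_dens M \<alpha> \<tau> R x" "0 \<le> p0_unnorm M \<alpha> \<tau> R l x / Z" for x
    using C Z_pos prior_unnorm_nonneg[OF tau_pos] by (simp_all add: prior_dens_def p0_unnorm_def)
  show "integral\<^sup>L (lebM M) (\<lambda>x. p0_unnorm M \<alpha> \<tau> R l x / Z) = 1"
    using Z_pos unfolding Z_def by simp
  show "prior_dens M \<alpha> \<tau> R x \<noteq> 0" if "p0_unnorm M \<alpha> \<tau> R l x / Z \<noteq> 0" for x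
    using that prior_unnorm_pos[OF tau_pos p0_unnorm_support(2)[OF l], of x \<alpha>] C
    by (auto simp: prior_dens_def)
  show "log (exp 1) (p0_unnorm M \<alpha> \<tau> R l x / Z / prior_dens M \<alpha> \<tau> R x)
      \<le> 2 * \<alpha> * l1norm M l + 4 * (\<Sum>j<M. ln (1 + \<bar>l j\<bar> / \<tau>)) + 2"
    if "p0_unnorm M \<alpha> \<tau> R l x / Z \<noteq> 0" for x
    using that log_p0_prior_ratio_le[OF l] unfolding Z_def by auto
  show "0 \<le> 2 * \<alpha> * l1norm M l + 4 * (\<Sum>j<M. ln (1 + \<bar>l j\<bar> / \<tau>)) + 2"
    using alpha_pos tau_pos l1norm_nonneg[of M l]
    by (intro add_nonneg_nonneg mult_nonneg_nonneg sum_nonneg) auto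
qed (use integrable_p0_unnorm in auto)

end

theorem lemma3:
  fixes M :: nat and \<tau> \<alpha> :: real and R :: ereal and ls :: "nat \<Rightarrow> real"
  assumes "M \<ge> 2" and "\<tau> > 0" and "\<alpha> > 0"
    and "R > ereal (2 * real M * \<tau>)"
    and "\<alpha> \<le> 1 / (4 * real M * \<tau>)"
    and "ereal (l1norm M ls) \<le> R - ereal (2 * real M * \<tau>)"
  shows "(\<integral>x. (x 0 - ls 0)\<^sup>2 \<partial>p0 M \<alpha> \<tau> R ls) \<le> 4 * \<tau>\<^sup>2 * exp (4 * real M * \<alpha> * \<tau>)
     \<and> KL_divergence (exp 1) (sparsity_prior M \<alpha> \<tau> R) (p0 M \<alpha> \<tau> R ls)
           \<le> 2 * (\<alpha> * l1norm M ls + 1) + 4 * (\<Sum>j<M. ln (1 + \<bar>ls j\<bar> / \<tau>))"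
proof -
  interpret sparsity_prior_setting M \<alpha> \<tau> R
    using assms(2-5) by unfold_locales auto
  have "1 / 4 \<le> ln (2 :: real)"
    using ln2_ge_two_thirds by simp
  then have "exp (1 / 4) \<le> exp (ln (2 :: real))"
    by (rule exp_mono)
  then have "2 * exp (1 / 4) * \<tau>\<^sup>2 \<le> 2 * 2 * \<tau>\<^sup>2"
    by (intro mult_right_mono mult_left_mono) auto
  also have "\<dots> \<le> 4 * \<tau>\<^sup>2 * exp (4 * real M * \<alpha> * \<tau>)"
    using assms(2,3) by simp
  finally have "(\<integral>x. (x 0 - ls 0)\<^sup>2 \<partial>p0 M \<alpha> \<tau> R ls) \<le> 4 * \<tau>\<^sup>2 * exp (4 * real M * \<alpha> * \<tau>)"
    using p0_second_moment_le[of 0 ls] assms(1) by (auto intro: order_trans)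
  then show ?thesis
    using KL_p0_le[OF assms(6)] by (simp add: algebra_simps)
qed

end
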